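(* Let $n,k,l$ be nonnegative integers with $k+l\le n$, let $\alpha,\beta>-1$, set $\sigma=\alpha+\beta+1$, and for $h=k,\ldots,n-l$ and $i=k+l,\ldots,n$ define \[ z_{hi}=\binom{n}{h}\frac{(2i+\sigma)(k+l-n)_{i-k-l}(\alpha+2l+1)_{n-l-h}(\beta+2k+1)_{h-k}}{(\alpha+2l+1)_{i-k-l}\,(i+k+l+\sigma)_{n+1-k-l}},\qquad w_{hi}=Q_{i-k-l}(h-k;\,\beta+2k,\,\alpha+2l,\,n-k-l). \] Then for each fixed $h$ (and whenever the indices involved lie in the range $k+l\le i\le n$): \[ z_{h,k+l}=\binom{n}{h}\frac{(\alpha+2l+1)_{n-l-h}(\beta+2k+1)_{h-k}}{(2k+2l+\sigma+1)_{n-k-l}}, \] \[ z_{hi}=\frac{(2i+\sigma)(i+k+l+\alpha+\beta)(i-n-1)}{(\alpha+l+i-k)(i+n+\sigma)(2i+\alpha+\beta-1)}\,z_{h,i-1}\qquad(i=k+l+1,\ldots,n); \] and \[ w_{h,k+l}=1,\qquad w_{h,k+l+1}=1+\frac{(h-k)(2k+2l+\sigma+1)}{(k+l-n)(\beta+2k+1)}, \] \[ w_{hi}=P_h(i)\,w_{h,i-1}+S(i)\,w_{h,i-2}\qquad(i=k+l+2,\ldots,n), \] where \[ S(i)=\frac{(i-k-l-1)(i+\beta+\alpha+n)(i+l+\alpha-k-1)(2i+\beta+\alpha)}{(2i+\beta+\alpha-2)(i+k+l+\beta+\alpha)(i+k+\beta-l)(i-n-1)}, \] \[ P_h(i)=1-S(i)-\frac{(k-h)(2i+\alpha+\beta-1)_2}{(i+k+l+\alpha+\beta)(i+k+\beta-l)(i-n-1)}.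 \]
   Context: Pochhammer symbol: $(a)_0=1$, $(a)_j=a(a+1)\cdots(a+j-1)$. Hahn polynomials: for a nonnegative integer $N$, $a,b>-1$ and $m=0,1,\ldots,N$, $Q_m(x;a,b,N)=\sum_{j=0}^m\frac{(-m)_j(m+a+b+1)_j(-x)_j}{j!\,(a+1)_j\,(-N)_j}$. (The products $d_{hi}=z_{hi}w_{hi}$ are the coefficients of the Bernstein polynomial $B^n_h(x)=\binom nh x^h(1-x)^{n-h}$ in the basis of modified Jacobi polynomials $J_{i,k,l}^{(\alpha,\beta)}(x)=(1-x)^lx^kR^{(\alpha+2l,\beta+2k)}_{i-k-l}(x)$, $i=k+l,\ldots,n$, with $R^{(a,b)}_m$ the shifted Jacobi polynomials.) *)

theory Defs
  imports Complex_Main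
begin

definition hahnQ :: "nat \<Rightarrow> real \<Rightarrow> real \<Rightarrow> real \<Rightarrow> nat \<Rightarrow> real" where
  "hahnQ m x a b N =
     (\<Sum>j=0..m. pochhammer (- real m) j * pochhammer (real m + a + b + 1) j * pochhammer (- x) j
        / (fact j * pochhammer (a + 1) j * pochhammer (- real N) j))"

definition zcoef :: "nat \<Rightarrow> nat \<Rightarrow> nat \<Rightarrow> real \<Rightarrow> real \<Rightarrow> nat \<Rightarrow> nat \<Rightarrow> real" where
  "zcoef n k l \<alpha> \<beta> h i =
     (let \<sigma> = \<alpha> + \<beta> + 1 in
      real (n choose h) *
      ((2 * real i + \<sigma>) * pochhammer (real k + real l - real n) (i - k - l)
        * pochhammer (\<alpha> + 2 * real l + 1) (n - l - h) * pochhammer (\<beta> + 2 * real k + 1) (h - k))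
      / (pochhammer (\<alpha> + 2 * real l + 1) (i - k - l) * pochhammer (real i + real k + real l + \<sigma>) (n + 1 - k - l)))"

definition wcoef :: "nat \<Rightarrow> nat \<Rightarrow> nat \<Rightarrow> real \<Rightarrow> real \<Rightarrow> nat \<Rightarrow> nat \<Rightarrow> real" where
  "wcoef n k l \<alpha> \<beta> h i =
     hahnQ (i - k - l) (real h - real k) (\<beta> + 2 * real k) (\<alpha> + 2 * real l) (n - k - l)"

definition Scoef :: "nat \<Rightarrow> nat \<Rightarrow> nat \<Rightarrow> real \<Rightarrow> real \<Rightarrow> nat \<Rightarrow> real" where
  "Scoef n k l \<alpha> \<beta> i =
     ((real i - real k - real l - 1) * (real i + \<beta> + \<alpha> + real n) * (real i + real l + \<alpha> - real k - 1)
        * (2 * real i + \<beta> + \<alpha>))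
     / ((2 * real i + \<beta> + \<alpha> - 2) * (real i + real k + real l + \<beta> + \<alpha>)
        * (real i + real k + \<beta> - real l) * (real i - real n - 1))"

definition Pcoef :: "nat \<Rightarrow> nat \<Rightarrow> nat \<Rightarrow> real \<Rightarrow> real \<Rightarrow> nat \<Rightarrow> nat \<Rightarrow> real" where
  "Pcoef n k l \<alpha> \<beta> h i =
     1 - Scoef n k l \<alpha> \<beta> i
       - (real k - real h) * pochhammer (2 * real i + \<alpha> + \<beta> - 1) 2
         / ((real i + real k + real l + \<alpha> + \<beta>) * (real i + real k + \<beta> - real l) * (real i - real n - 1))"

end

theory Submission
  imports Defs
begin

text \<open>The numbers w_{hi} are Hahn polynomials Q_m in the degree m = i - k - l, so their
recurrence is the classical three-term recurrence of Hahn polynomials in the degree, with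
parameters a = \<beta> + 2k, b = \<alpha> + 2l, N = n - k - l, divided through by its leading coefficient.
That recurrence is checked coefficientwise in the basis (-x)_j, using -x (-x)_j = (-x)_{j+1} - j (-x)_j;
after clearing the denominators of the coefficients it becomes a polynomial identity between
Pochhammer products. The recurrence for z_{hi} is the quotient of consecutive Pochhammer
ratios.\<close>

lemma pochhammer_plus_1_Suc:
  fixes z :: "'a :: comm_semiring_1"
  shows "z * pochhammer (z + 1) (Suc r) = pochhammer z r * (z + of_nat r) * (z + of_nat r + 1)"
proof -
  have "z * pochhammer (z + 1) (Suc r) = pochhammer z (Suc (Suc r))"
    by (rule pochhammer_rec[symmetric])
  also have "\<dots> = pochhammer z r * (z + of_nat r) * (z + of_nat r + 1)"
    by (simp only: pochhammer_rec' of_nat_Suc) (simp add: algebra_simps)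
  finally show ?thesis .
qed

text \<open>Splitting the coefficients of Q_m into numerator and denominator lets the three-term identity
hold for the numerators unconditionally. The degree m of the numerator is real, so that the
neighbouring degrees m + 1 and m - 1 need no truncated subtraction.\<close>

definition hahn_numer :: "real \<Rightarrow> real \<Rightarrow> real \<Rightarrow> nat \<Rightarrow> real" where
  "hahn_numer m a b j = pochhammer (- m) j * pochhammer (m + a + b + 1) j"

definition hahn_denom :: "real \<Rightarrow> nat \<Rightarrow> nat \<Rightarrow> real" where
  "hahn_denom a N j = fact j * pochhammer (a + 1) j * pochhammer (- real N) j"

lemma hahn_numer_three_term_identity:
  fixes m a b N :: real and r :: nat
  defines "E \<equiv> (2*m+a+b)*(2*m+a+b+1)*(2*m+a+b+2)"
    and "A \<equiv> (m+a+b+1)*(m+a+1)*(N-m)*(2*m+a+b)"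
    and "C \<equiv> m*(m+a+b+N+1)*(m+b)*(2*m+a+b+2)"
  shows "E * ((real r + 1)*(a+1+r)*(r-N) * hahn_numer m a b r - (real r + 1) * hahn_numer m a b (Suc r))
    = A * hahn_numer (m+1) a b (Suc r) - (A+C) * hahn_numer m a b (Suc r) + C * hahn_numer (m-1) a b (Suc r)"
proof -
  define u where "u = m + a + b + 1"
  define q where "q = pochhammer (- m) r"
  define v where "v = pochhammer u r"
  have "hahn_numer m a b r = q * v"
    and "hahn_numer m a b (Suc r) = q * (- m + r) * (v * (u + r))"
    unfolding hahn_numer_def q_def v_def u_def by (simp_all add: pochhammer_rec')
  moreover have "A * hahn_numer (m+1) a b (Suc r)
      = (m+a+1)*(N-m)*(2*m+a+b) * (- m - 1) * q * (v * (u + r) * (u + r + 1))"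
  proof -
    have "pochhammer (- (m + 1)) (Suc r) = (- m - 1) * q"
      unfolding q_def by (simp add: pochhammer_rec)
    moreover have "m + 1 + a + b + 1 = u + 1" and "A = u * ((m+a+1)*(N-m)*(2*m+a+b))"
      unfolding u_def A_def by simp_all
    ultimately show ?thesis
      unfolding hahn_numer_def v_def pochhammer_plus_1_Suc[of u r, symmetric] by (simp only:) simp
  qed
  moreover have "C * hahn_numer (m-1) a b (Suc r)
      = - (m+a+b+N+1)*(m+b)*(2*m+a+b+2) * (q * (- m + r) * (- m + r + 1)) * ((u - 1) * v)"
  proof -
    have "pochhammer (m - 1 + a + b + 1) (Suc r) = (u - 1) * v"
      unfolding u_def v_def by (simp add: pochhammer_rec algebra_simps)
    moreover have "- (m - 1) = - m + 1" and "C = - (- m) * ((m+a+b+N+1)*(m+b)*(2*m+a+b+2))"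
      unfolding C_def by simp_all
    ultimately show ?thesis
      unfolding hahn_numer_def q_def pochhammer_plus_1_Suc[of "- m" r, symmetric]
      by (simp only:) (simp add: algebra_simps)
  qed
  \<comment> \<open>every term is q v times a polynomial\<close>
  moreover have "E * ((real r + 1)*(a+1+r)*(r-N) - (real r + 1) * (- m + r) * (u + r))
      = (m+a+1)*(N-m)*(2*m+a+b) * (- m - 1) * ((u + r) * (u + r + 1)) - (A+C) * ((- m + r) * (u + r))
        - (m+a+b+N+1)*(m+b)*(2*m+a+b+2) * ((- m + r) * (- m + r + 1)) * (u - 1)"
    unfolding E_def A_def C_def u_def by algebra
  ultimately show ?thesis
    by algebra
qed

lemma hahn_denom_Suc:
  "hahn_denom a N (Suc j) = hahn_denom a N j * ((real j + 1) * (a + 1 + j) * (j - real N))"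
  unfolding hahn_denom_def by (simp add: pochhammer_rec' algebra_simps)

lemma hahn_numer_eq_0: "m < j \<Longrightarrow> hahn_numer (real m) a b j = 0"
  by (simp add: hahn_numer_def pochhammer_of_nat_eq_0_iff)

lemma hahnQ_eq_sum:
  assumes "m \<le> M"
  shows "hahnQ m x a b N = (\<Sum>j=0..M. hahn_numer (real m) a b j / hahn_denom a N j * pochhammer (- x) j)"
proof -
  have "hahnQ m x a b N = (\<Sum>j=0..m. hahn_numer (real m) a b j / hahn_denom a N j * pochhammer (- x) j)"
    unfolding hahnQ_def hahn_numer_def hahn_denom_def by (rule sum.cong) auto
  also have "\<dots> = (\<Sum>j=0..M. hahn_numer (real m) a b j / hahn_denom a N j * pochhammer (- x) j)"
    using assms by (intro sum.mono_neutral_left) (auto simp: hahn_numer_eq_0)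
  finally show ?thesis .
qed

lemma hahnQ_three_term_recurrence:
  fixes a b x :: real
  assumes "1 \<le> m" and "m < N" and "a > -1"
  defines "E \<equiv> (2*real m+a+b)*(2*real m+a+b+1)*(2*real m+a+b+2)"
    and "A \<equiv> (real m+a+b+1)*(real m+a+1)*(real N-real m)*(2*real m+a+b)"
    and "C \<equiv> real m*(real m+a+b+real N+1)*(real m+b)*(2*real m+a+b+2)"
  shows "- x * E * hahnQ m x a b N
    = A * hahnQ (Suc m) x a b N - (A + C) * hahnQ m x a b N + C * hahnQ (m - 1) x a b N"
proof -
  define c where "c \<mu> j = hahn_numer \<mu> a b j / hahn_denom a N j" for \<mu> j
  define p where "p j = pochhammer (- x) j" for j
  have Q: "hahnQ k x a b N = (\<Sum>j=0..Suc m. c (real k) j * p j)" if "k \<le> Suc m" for k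
    unfolding c_def p_def using hahnQ_eq_sum[OF that] .
  have coeff: "E * (c m r - (real r + 1) * c m (Suc r))
      = A * c (real m + 1) (Suc r) - (A + C) * c m (Suc r) + C * c (real m - 1) (Suc r)" if "r \<le> m" for r
  proof -
    define d where "d = hahn_denom a N (Suc r)"
    have "(real r + 1) * (a + 1 + r) * (r - real N) \<noteq> 0"
      using that assms(2,3) by (auto simp: add_pos_nonneg)
    then have "c m r = (real r + 1) * (a + 1 + r) * (r - real N) * hahn_numer m a b r / d"
      unfolding c_def d_def hahn_denom_Suc by simp
    then have "E * (c m r - (real r + 1) * c m (Suc r))
        = E * ((real r + 1) * (a + 1 + r) * (r - real N) * hahn_numer m a b r
            - (real r + 1) * hahn_numer m a b (Suc r)) / d"
      unfolding c_def d_def by (simp add: right_diff_distrib diff_divide_distrib)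
    also have "\<dots> = (A * hahn_numer (real m + 1) a b (Suc r) - (A + C) * hahn_numer m a b (Suc r)
        + C * hahn_numer (real m - 1) a b (Suc r)) / d"
      unfolding E_def A_def C_def hahn_numer_three_term_identity ..
    finally show ?thesis
      unfolding c_def d_def by (simp add: diff_divide_distrib add_divide_distrib)
  qed
  have c_0: "c \<mu> 0 = 1" for \<mu>
    by (simp add: c_def hahn_numer_def hahn_denom_def)
  have c_top: "c m (Suc m) = 0"
    by (simp add: c_def hahn_numer_eq_0)
  have "- x * E * hahnQ m x a b N
      = (\<Sum>j=0..Suc m. E * c m j * p (Suc j)) - (\<Sum>j=0..Suc m. E * c m j * (real j * p j))"
    unfolding Q[OF le_SucI[OF order_refl]] sum_distrib_left sum_subtractf[symmetric]
    by (rule sum.cong) (simp_all add: p_def pochhammer_rec' algebra_simps)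
  also have "\<dots> = (\<Sum>r=0..m. E * c m r * p (Suc r))
      - (\<Sum>r=0..m. E * c m (Suc r) * ((real r + 1) * p (Suc r)))"
    using c_top
    by (simp add: sum.atLeast0_atMost_Suc_shift[of "\<lambda>j. E * c m j * (real j * p j)"]
        sum.atLeast0_atMost_Suc add.commute del: sum.cl_ivl_Suc)
  also have "\<dots> = (\<Sum>r=0..m. E * (c m r - (real r + 1) * c m (Suc r)) * p (Suc r))"
    unfolding sum_subtractf[symmetric] by (rule sum.cong) (simp_all add: algebra_simps)
  also have "\<dots> = (\<Sum>r=0..m. (A * c (real m + 1) (Suc r) - (A + C) * c m (Suc r)
      + C * c (real m - 1) (Suc r)) * p (Suc r))"
    using coeff by simp
  \<comment> \<open>the new term j = 0 is (A - (A + C) + C) p 0 = 0\<close>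
  also have "\<dots> = (\<Sum>j=0..Suc m. (A * c (real m + 1) j - (A + C) * c m j + C * c (real m - 1) j) * p j)"
    by (simp add: sum.atLeast0_atMost_Suc_shift c_0 del: sum.cl_ivl_Suc)
  also have "\<dots> = A * hahnQ (Suc m) x a b N - (A + C) * hahnQ m x a b N + C * hahnQ (m - 1) x a b N"
    using assms(1) by (simp add: Q of_nat_diff sum_distrib_left sum.distrib sum_subtractf algebra_simps)
  finally show ?thesis .
qed

lemma zcoef_start:
  assumes "k + l \<le> n" and "2 * real k + 2 * real l + \<alpha> + \<beta> + 1 \<noteq> 0"
  shows "zcoef n k l \<alpha> \<beta> h (k + l) =
    real (n choose h) * pochhammer (\<alpha> + 2 * real l + 1) (n - l - h) * pochhammer (\<beta> + 2 * real k + 1) (h - k)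
    / pochhammer (2 * real k + 2 * real l + (\<alpha> + \<beta> + 1) + 1) (n - k - l)"
proof -
  define y where "y = 2 * real k + 2 * real l + (\<alpha> + \<beta> + 1)"
  have "n + 1 - k - l = Suc (n - k - l)"
    using assms(1) by simp
  then have "pochhammer (real (k + l) + real k + real l + (\<alpha> + \<beta> + 1)) (n + 1 - k - l)
      = y * pochhammer (y + 1) (n - k - l)"
    unfolding y_def by (simp add: pochhammer_rec algebra_simps)
  moreover have "2 * real (k + l) + (\<alpha> + \<beta> + 1) = y"
    unfolding y_def by simp
  moreover have "y \<noteq> 0"
    using assms(2) unfolding y_def by simp
  ultimately show ?thesis
    unfolding zcoef_def Let_def y_def[symmetric] by simp
qed

lemma zcoef_rec:
  assumes "k + l < i" and "i \<le> n" and "\<alpha> > -1" and "\<beta> > -1"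
    and "2 * real i + \<alpha> + \<beta> - 1 \<noteq> 0"
  shows "zcoef n k l \<alpha> \<beta> h i =
    (2 * real i + (\<alpha> + \<beta> + 1)) * (real i + real k + real l + \<alpha> + \<beta>) * (real i - real n - 1)
    / ((\<alpha> + real l + real i - real k) * (real i + real n + (\<alpha> + \<beta> + 1)) * (2 * real i + \<alpha> + \<beta> - 1))
    * zcoef n k l \<alpha> \<beta> h (i - 1)"
proof -
  define m where "m = i - 1 - k - l"
  define N where "N = n - k - l"
  define y where "y = real i + real k + real l + \<alpha> + \<beta>"
  define W where "W = real (n choose h) * pochhammer (real k + real l - real n) m
    * pochhammer (\<alpha> + 2 * real l + 1) (n - l - h) * pochhammer (\<beta> + 2 * real k + 1) (h - k)
    / (pochhammer (\<alpha> + 2 * real l + 1) m * pochhammer (y + 1) N)"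
  have i_eq: "i - k - l = Suc m" "n + 1 - k - l = Suc N"
    using assms(1,2) unfolding m_def N_def by auto
  have real_i: "real i = real k + real l + real m + 1" and real_N: "real N = real n - real k - real l"
    using assms(1,2) unfolding m_def N_def by auto
  have "zcoef n k l \<alpha> \<beta> h i = W * (2 * real i + (\<alpha> + \<beta> + 1)) * (real i - real n - 1)
      / ((\<alpha> + real l + real i - real k) * (real i + real n + (\<alpha> + \<beta> + 1)))"
  proof -
    have "pochhammer (real i + real k + real l + (\<alpha> + \<beta> + 1)) (Suc N)
        = pochhammer (y + 1) N * (real i + real n + (\<alpha> + \<beta> + 1))"
      unfolding y_def pochhammer_rec' real_N by (simp add: algebra_simps)
    then show ?thesis
      unfolding zcoef_def Let_def i_eq W_def pochhammer_rec' by (simp add: real_i algebra_simps)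
  qed
  moreover have "zcoef n k l \<alpha> \<beta> h (i - 1) = W * (2 * real i + \<alpha> + \<beta> - 1) / y"
  proof -
    have "i - 1 - k - l = m" and "real (i - 1) = real i - 1"
      using assms(1) unfolding m_def by auto
    moreover have "pochhammer (real i - 1 + real k + real l + (\<alpha> + \<beta> + 1)) (Suc N)
        = y * pochhammer (y + 1) N"
      unfolding y_def pochhammer_rec by (simp add: algebra_simps)
    ultimately show ?thesis
      unfolding zcoef_def Let_def i_eq W_def by (simp add: algebra_simps)
  qed
  moreover have "y \<noteq> 0"
  proof (cases "k + l + m = 0")
    case True
    then show ?thesis using assms(5) unfolding y_def real_i by simp
  next
    case False
    then have "real k + real l + real m \<ge> 1" by linarith
    then show ?thesis using assms(3,4) unfolding y_def real_i by linarith
  qed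
  moreover have "W * T * B / D = T * y * B / (D * s) * (W * s / y)" if "s \<noteq> 0" and "y \<noteq> 0"
    for T B D s :: real
    using that by (simp add: field_simps)
  ultimately show ?thesis
    using assms(5) unfolding y_def by simp
qed

lemma wcoef_start: "wcoef n k l \<alpha> \<beta> h (k + l) = 1"
  by (simp add: wcoef_def hahnQ_def)

lemma wcoef_start_Suc:
  assumes "k + l < n" and "\<beta> > -1"
  shows "wcoef n k l \<alpha> \<beta> h (k + l + 1) =
    1 + (real h - real k) * (2 * real k + 2 * real l + (\<alpha> + \<beta> + 1) + 1)
        / ((real k + real l - real n) * (\<beta> + 2 * real k + 1))"
proof -
  have "real (n - k - l) = real n - real k - real l" and "real k + real l - real n \<noteq> 0"
    and "\<beta> + 2 * real k + 1 \<noteq> 0"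
    using assms by auto
  then show ?thesis
    unfolding wcoef_def hahnQ_def by (simp add: field_simps)
qed

lemma wcoef_rec:
  assumes "k + l + 2 \<le> i" and "i \<le> n" and "\<alpha> > -1" and "\<beta> > -1"
  shows "wcoef n k l \<alpha> \<beta> h i =
    Pcoef n k l \<alpha> \<beta> h i * wcoef n k l \<alpha> \<beta> h (i - 1) + Scoef n k l \<alpha> \<beta> i * wcoef n k l \<alpha> \<beta> h (i - 2)"
proof -
  define m where "m = i - 1 - k - l"
  define N where "N = n - k - l"
  define a where "a = \<beta> + 2 * real k"
  define b where "b = \<alpha> + 2 * real l"
  define x where "x = real h - real k"
  define E where "E = (2*real m+a+b)*(2*real m+a+b+1)*(2*real m+a+b+2)"
  define A where "A = (real m+a+b+1)*(real m+a+1)*(real N-real m)*(2*real m+a+b)"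
  define C where "C = real m*(real m+a+b+real N+1)*(real m+b)*(2*real m+a+b+2)"
  have m: "1 \<le> m" "m < N"
    using assms(1,2) unfolding m_def N_def by auto
  have real_i: "real i = real k + real l + real m + 1" and real_N: "real N = real n - real k - real l"
    using assms(1,2) unfolding m_def N_def by auto
  have "i - k - l = Suc m" "i - 1 - k - l = m" "i - 2 - k - l = m - 1"
    using assms(1) unfolding m_def by auto
  then have w: "wcoef n k l \<alpha> \<beta> h i = hahnQ (Suc m) x a b N"
    "wcoef n k l \<alpha> \<beta> h (i - 1) = hahnQ m x a b N"
    "wcoef n k l \<alpha> \<beta> h (i - 2) = hahnQ (m - 1) x a b N"
    unfolding wcoef_def N_def a_def b_def x_def by simp_all
  define c where "c = 2*real m+a+b"
  define G where "G = (real m+a+b+1)*(real m+a+1)*(real m-real N)"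
  have "G \<noteq> 0" and "c \<noteq> 0"
    using m assms(3,4) unfolding G_def c_def a_def b_def by (auto simp: add_pos_pos)
  moreover have A_eq: "A = - G * c"
    unfolding A_def G_def c_def by (simp add: algebra_simps)
  ultimately have A: "A \<noteq> 0"
    by simp
  have S: "Scoef n k l \<alpha> \<beta> i = - C / A"
  proof -
    have "Scoef n k l \<alpha> \<beta> i = C / (- A)"
      unfolding Scoef_def C_def A_def a_def b_def real_i real_N by (simp add: algebra_simps)
    then show ?thesis by simp
  qed
  have P: "Pcoef n k l \<alpha> \<beta> h i = (A + C - x * E) / A"
  proof -
    have "(real k - real h) * pochhammer (2 * real i + \<alpha> + \<beta> - 1) 2 = - x * ((c + 1) * (c + 2))"
      unfolding x_def c_def a_def b_def real_i numeral_2_eq_2 pochhammer_Suc pochhammer_0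
      by (simp add: algebra_simps)
    moreover have "(real i + real k + real l + \<alpha> + \<beta>) * (real i + real k + \<beta> - real l) * (real i - real n - 1) = G"
      unfolding G_def a_def b_def real_i real_N by (simp add: algebra_simps)
    ultimately have "Pcoef n k l \<alpha> \<beta> h i = 1 - (- C / A) - (- x) * ((c + 1) * (c + 2)) / G"
      unfolding Pcoef_def S by simp
    also have "\<dots> = (A + C - x * E) / A"
      using \<open>G \<noteq> 0\<close> \<open>c \<noteq> 0\<close> unfolding A_eq E_def c_def[symmetric] by (simp add: field_simps)
    finally show ?thesis .
  qed
  have "- x * E * hahnQ m x a b N
      = A * hahnQ (Suc m) x a b N - (A + C) * hahnQ m x a b N + C * hahnQ (m - 1) x a b N"
    unfolding E_def A_def C_def using hahnQ_three_term_recurrence m assms(4) unfolding a_def by simp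
  then show ?thesis
    unfolding w P S using A by (simp add: field_simps)
qed

theorem theorem3:
  fixes n k l h :: nat and \<alpha> \<beta> :: real
  assumes "k + l \<le> n" and "\<alpha> > -1" and "\<beta> > -1"
    and "k \<le> h" and "h \<le> n - l"
  shows
    "(pochhammer (real k + real l + \<alpha> + \<beta> + 1) (n + 1 - k - l) \<noteq> 0 \<longrightarrow>
       zcoef n k l \<alpha> \<beta> h (k + l) =
         real (n choose h) * pochhammer (\<alpha> + 2 * real l + 1) (n - l - h)
           * pochhammer (\<beta> + 2 * real k + 1) (h - k)
         / pochhammer (2 * real k + 2 * real l + (\<alpha> + \<beta> + 1) + 1) (n - k - l))
   \<and> (\<forall>i. k + l + 1 \<le> i \<and> i \<le> n \<and> 2 * real i + \<alpha> + \<beta> - 1 \<noteq> 0 \<longrightarrow>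
       zcoef n k l \<alpha> \<beta> h i =
         (2 * real i + (\<alpha> + \<beta> + 1)) * (real i + real k + real l + \<alpha> + \<beta>) * (real i - real n - 1)
         / ((\<alpha> + real l + real i - real k) * (real i + real n + (\<alpha> + \<beta> + 1)) * (2 * real i + \<alpha> + \<beta> - 1))
         * zcoef n k l \<alpha> \<beta> h (i - 1))
   \<and> wcoef n k l \<alpha> \<beta> h (k + l) = 1
   \<and> (k + l + 1 \<le> n \<longrightarrow>
       wcoef n k l \<alpha> \<beta> h (k + l + 1) =
         1 + (real h - real k) * (2 * real k + 2 * real l + (\<alpha> + \<beta> + 1) + 1)
             / ((real k + real l - real n) * (\<beta> + 2 * real k + 1)))
   \<and> (\<forall>i. k + l + 2 \<le> i \<and> i \<le> n \<longrightarrow>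
       wcoef n k l \<alpha> \<beta> h i =
         Pcoef n k l \<alpha> \<beta> h i * wcoef n k l \<alpha> \<beta> h (i - 1)
         + Scoef n k l \<alpha> \<beta> i * wcoef n k l \<alpha> \<beta> h (i - 2))"
proof -
  have "2 * real k + 2 * real l + \<alpha> + \<beta> + 1 \<noteq> 0"
    if "pochhammer (real k + real l + \<alpha> + \<beta> + 1) (n + 1 - k - l) \<noteq> 0"
  proof (cases "k + l = 0")
    case True
    with that show ?thesis by (simp add: pochhammer_rec)
  next
    case False
    then have "real k + real l \<ge> 1" by linarith
    with assms(2,3) show ?thesis by linarith
  qed
  then show ?thesis
    using assms zcoef_start zcoef_rec wcoef_start wcoef_start_Suc wcoef_rec by auto
qed

end
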